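(* Let $n \in \mathbb{N}$, $X = Y = L^2([0,1]^n)$, $\mathcal{D}^+ = \{x \in X : x \ge 0 \text{ a.e. on } [0,1]^n\}$, and define $F : \mathcal{D}^+ \to Y$ by $[F(x)](s) = \int_{[0,s_1]\times\cdots\times[0,s_n]} x(s-t)\,x(t)\,dt$ for $s \in [0,1]^n$. Then the equation $F(x) = y$ is locally ill-posed at every point $x^\dagger \in \mathcal{D}^+$: for every $x^\dagger \in \mathcal{D}^+$ and every $r>0$ there exists a sequence $\{x_k\} \subset \mathcal{D}^+$ with $\|x_k - x^\dagger\|_X \le r$ for all $k$, such that $\|F(x_k) - F(x^\dagger)\|_Y \to 0$ but $\|x_k - x^\dagger\|_X \not\to 0$ as $k \to \infty$.
   Context: All functions are real-valued; $L^2([0,1]^n)$ denotes the real functions in $L^2(\mathbb{R}^n)$ vanishing a.e. outside $[0,1]^n$, with the usual $L^2$ norm. *)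

theory Defs
  imports "HOL-Analysis.Analysis"
begin

definition unit_cube :: "(real^'n) set" where
  "unit_cube = cbox 0 1"

text \<open>Real L^2 functions on R^n vanishing a.e. outside [0,1]^n (as representatives).\<close>
definition L2cube :: "(real^'n \<Rightarrow> real) set" where
  "L2cube = {x. x \<in> borel_measurable lebesgue \<and>
                 integrable lebesgue (\<lambda>t. (x t)^2) \<and>
                 (AE t in lebesgue. t \<notin> unit_cube \<longrightarrow> x t = 0)}"

definition L2norm :: "(real^'n \<Rightarrow> real) \<Rightarrow> real" where
  "L2norm x = sqrt (LINT t|lebesgue. (x t)^2)"

definition Dplus :: "(real^'n \<Rightarrow> real) set" where
  "Dplus = {x \<in> L2cube. AE t in lebesgue. t \<in> unit_cube \<longrightarrow> x t \<ge> 0}"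

text \<open>Autoconvolution operator: [F x](s) = integral over [0,s_1]x...x[0,s_n] of x(s-t) x(t) dt
  for s in [0,1]^n, and 0 outside the cube (elements of Y vanish there).\<close>
definition autoconv :: "(real^'n \<Rightarrow> real) \<Rightarrow> (real^'n \<Rightarrow> real)" where
  "autoconv x s = (if s \<in> unit_cube
      then (LINT t|restrict_space lebesgue (cbox 0 s). x (s - t) * x t) else 0)"

end

theory Submission
  imports Defs
begin

text \<open>
  Perturb \<open>x\<^sup>\<dagger>\<close> by a bump \<open>h = a \<one>\<^sub>C\<close> on the small corner cube \<open>C = [1-\<epsilon>,1]\<^sup>n\<close>, with the
  height \<open>a = r / sqrt (\<epsilon>\<^sup>n)\<close> chosen so that \<open>\<parallel>h\<parallel> = r\<close>. For \<open>\<epsilon> < 1/2\<close> the set \<open>C + C\<close> misses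
  \<open>[0,1]\<^sup>n\<close>, so \<open>h * h\<close> vanishes there and \<open>F(x\<^sup>\<dagger> + h) - F(x\<^sup>\<dagger>)\<close> is twice the cross term
  \<open>x\<^sup>\<dagger> * h\<close>. The cross term is supported in \<open>C\<close> and bounded by \<open>a\<close> times the integral of
  \<open>|x\<^sup>\<dagger>|\<close> over \<open>[0,\<epsilon>]\<^sup>n\<close>, so its norm is at most \<open>2r\<close> times that integral, which tends to
  \<open>0\<close> with \<open>\<epsilon>\<close> by dominated convergence.
\<close>

lemma reflection_as_affine_map:
  fixes s :: "'a::euclidean_space"
  shows "(\<lambda>x. s + (\<Sum>j\<in>Basis. (- 1 * (x \<bullet> j)) *\<^sub>R j)) = (\<lambda>x. s - x)"
proof
  fix x :: 'a
  have "(\<Sum>j\<in>Basis. (- 1 * (x \<bullet> j)) *\<^sub>R j) = - (\<Sum>j\<in>Basis. (x \<bullet> j) *\<^sub>R j)"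
    by (simp add: sum_negf)
  then show "s + (\<Sum>j\<in>Basis. (- 1 * (x \<bullet> j)) *\<^sub>R j) = s - x"
    by (simp add: euclidean_representation)
qed

lemma measurable_lebesgue_reflection:
  fixes s :: "'a::euclidean_space"
  shows "(\<lambda>x. s - x) \<in> lebesgue \<rightarrow>\<^sub>M lebesgue"
  using lebesgue_affine_measurable[of "\<lambda>_. -1" s, unfolded reflection_as_affine_map] by simp

lemma distr_lebesgue_reflection:
  fixes s :: "'a::euclidean_space"
  shows "distr lebesgue lebesgue (\<lambda>x. s - x) = lebesgue"
  using lebesgue_affine_euclidean[of "\<lambda>_. -1" s, unfolded reflection_as_affine_map]
  by (simp add: density_1)

lemma
  fixes s :: "'a::euclidean_space" and g :: "'a \<Rightarrow> real"
  assumes "g \<in> borel_measurable lebesgue"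
  shows integrable_reflection_iff: "integrable lebesgue (\<lambda>x. g (s - x)) \<longleftrightarrow> integrable lebesgue g"
    and integral_reflection: "(LINT x|lebesgue. g (s - x)) = integral\<^sup>L lebesgue g"
  using integrable_distr_eq[OF measurable_lebesgue_reflection assms]
    integral_distr[OF measurable_lebesgue_reflection assms]
  by (simp_all add: distr_lebesgue_reflection)

lemma borel_measurable_indicator_reflection:
  fixes s :: "'a::euclidean_space"
  assumes "A \<in> sets lebesgue"
  shows "(\<lambda>t. indicator A (s - t) :: real) \<in> borel_measurable lebesgue"
  using measurable_compose[OF measurable_lebesgue_reflection[of s] borel_measurable_indicator[OF assms]]
  by (simp add: o_def)

lemma autoconv_add_diff_le_cross_term:
  fixes x h :: "real^'n \<Rightarrow> real"
  assumes s: "s \<in> unit_cube"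
    and cross_integrable: "integrable lebesgue (\<lambda>t. indicator (cbox 0 s) t * (h (s - t) * x t))"
    and h_autoconv_vanishes: "\<And>t. t \<in> cbox 0 s \<Longrightarrow> h (s - t) * h t = 0"
  shows "\<bar>autoconv (\<lambda>t. x t + h t) s - autoconv x s\<bar>
    \<le> 2 * \<bar>LINT t|lebesgue. indicator (cbox 0 s) t * (h (s - t) * x t)\<bar>"
proof -
  define S where "S = cbox 0 s"
  define A where "A t = indicator S t * (x (s - t) * x t)" for t
  define B where "B t = indicator S t * (h (s - t) * x t)" for t
  have autoconv_eq: "autoconv y s = (LINT t|lebesgue. indicator S t * (y (s - t) * y t))" for y
    using s by (simp add: autoconv_def integral_restrict_space S_def)
  have S_symmetric: "indicator S (s - t) = (indicator S t :: real)" for t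
    by (auto simp: S_def indicator_def mem_box_cart)
  have expand: "indicator S t * ((x (s - t) + h (s - t)) * (x t + h t)) = A t + B t + B (s - t)" for t
  proof -
    have "indicator S t * (h (s - t) * h t) = 0"
      using h_autoconv_vanishes[of t] by (simp add: S_def indicator_def)
    then show ?thesis
      using S_symmetric[of t] by (simp add: A_def B_def algebra_simps)
  qed
  have B_integrable: "integrable lebesgue B"
    using cross_integrable unfolding B_def S_def .
  have B_reflected: "integrable lebesgue (\<lambda>t. B (s - t))" "(LINT t|lebesgue. B (s - t)) = integral\<^sup>L lebesgue B"
    using integrable_reflection_iff[of B s] integral_reflection[of B s] B_integrable
    by (auto simp: borel_measurable_integrable)
  have diff: "autoconv (\<lambda>t. x t + h t) s - autoconv x s
      = (LINT t|lebesgue. A t + B t + B (s - t)) - integral\<^sup>L lebesgue A"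
    unfolding autoconv_eq expand by (simp add: A_def[abs_def])
  show ?thesis
  proof (cases "integrable lebesgue A")
    case True
    then have "(LINT t|lebesgue. A t + B t + B (s - t)) = integral\<^sup>L lebesgue A + 2 * integral\<^sup>L lebesgue B"
      using B_integrable B_reflected by simp
    then show ?thesis
      unfolding diff B_def S_def by simp
  next
    case False
    \<comment> \<open>then both autoconvolutions take the junk value \<open>0\<close>\<close>
    have "\<not> integrable lebesgue (\<lambda>t. A t + B t + B (s - t))"
    proof
      assume "integrable lebesgue (\<lambda>t. A t + B t + B (s - t))"
      then have "integrable lebesgue (\<lambda>t. (A t + B t + B (s - t)) - B t - B (s - t))"
        using B_integrable B_reflected by (intro Bochner_Integration.integrable_diff)
      with False show False by simp
    qed
    with False show ?thesis unfolding diff by (simp add: not_integrable_integral_eq)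
  qed
qed

definition upper_corner :: "real \<Rightarrow> (real^'n) set" where
  "upper_corner e = cbox (\<chi> i. 1 - e) 1"

definition lower_corner :: "real \<Rightarrow> (real^'n) set" where
  "lower_corner e = cbox 0 (\<chi> i. e)"

lemma upper_corner_subset_unit_cube: "e \<le> 1 \<Longrightarrow> upper_corner e \<subseteq> unit_cube"
  by (auto simp: upper_corner_def unit_cube_def mem_box_cart) (smt (verit))

lemma lower_corner_mono: "e \<le> c \<Longrightarrow> lower_corner e \<subseteq> lower_corner c"
  by (auto simp: lower_corner_def mem_box_cart) (meson order_trans)

lemma measure_upper_corner: "0 \<le> e \<Longrightarrow> measure lebesgue (upper_corner e :: (real^'n) set) = e ^ CARD('n)"
  by (simp add: upper_corner_def content_cbox_cart interval_ne_empty_cart)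

lemma upper_corner_lmeasurable: "upper_corner e \<in> lmeasurable"
  by (simp add: upper_corner_def)

lemma diff_upper_corner_notin_upper_corner:
  fixes s t :: "real^'n"
  assumes "s \<in> unit_cube" "e < 1/2" "t \<in> upper_corner e"
  shows "s - t \<notin> upper_corner e"
proof
  assume "s - t \<in> upper_corner e"
  then obtain i :: 'n where "1 - e \<le> s$i - t$i"
    by (auto simp: upper_corner_def mem_box_cart)
  moreover have "1 - e \<le> t$i" "s$i \<le> 1"
    using assms by (auto simp: upper_corner_def unit_cube_def mem_box_cart)
  ultimately show False using assms(2) by linarith
qed

lemma mem_corners_if_diff_mem_upper_corner:
  fixes s t :: "real^'n"
  assumes "s \<in> unit_cube" "t \<in> cbox 0 s" "s - t \<in> upper_corner e"
  shows "t \<in> lower_corner e" "s \<in> upper_corner e"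
  using assms by (auto simp: upper_corner_def lower_corner_def unit_cube_def mem_box_cart)
    (smt (verit))+

lemma integrable_indicator_abs_L2cube:
  assumes x: "x \<in> L2cube" and K: "K \<in> lmeasurable"
  shows "integrable lebesgue (\<lambda>u. indicator K u * \<bar>x u\<bar>)"
proof (rule Bochner_Integration.integrable_bound)
  show "integrable lebesgue (\<lambda>u. (x u)^2 + indicator K u)"
    using x K by (intro Bochner_Integration.integrable_add integrable_real_indicator)
      (auto simp: L2cube_def fmeasurable_def)
  show "(\<lambda>u. indicator K u * \<bar>x u\<bar>) \<in> borel_measurable lebesgue"
    using x K by (intro borel_measurable_times borel_measurable_abs borel_measurable_indicator)
      (auto simp: L2cube_def)
  have "\<bar>x u\<bar> \<le> (x u)^2 + 1" for u
    using zero_le_power2[of "\<bar>x u\<bar> - 1/2"] by (simp add: power2_eq_square algebra_simps)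
  then show "AE u in lebesgue. norm (indicator K u * \<bar>x u\<bar>) \<le> norm ((x u)^2 + indicator K u)"
    by (intro AE_I2) (auto simp: indicator_def)
qed

lemma L2cube_add:
  assumes x: "x \<in> L2cube" and y: "y \<in> L2cube"
  shows "(\<lambda>t. x t + y t) \<in> L2cube"
proof -
  have "integrable lebesgue (\<lambda>t. (x t + y t)^2)"
  proof (rule Bochner_Integration.integrable_bound)
    show "integrable lebesgue (\<lambda>t. 2 * (x t)^2 + 2 * (y t)^2)"
      using x y by (auto simp: L2cube_def)
    show "(\<lambda>t. (x t + y t)^2) \<in> borel_measurable lebesgue"
      using x y by (auto simp: L2cube_def)
    have "(x t + y t)^2 \<le> 2 * (x t)^2 + 2 * (y t)^2" for t
      using zero_le_power2[of "x t - y t"] by (simp add: power2_eq_square algebra_simps)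
    then show "AE t in lebesgue. norm ((x t + y t)^2) \<le> norm (2 * (x t)^2 + 2 * (y t)^2)"
      by (intro AE_I2) simp
  qed
  moreover have "AE t in lebesgue. t \<notin> unit_cube \<longrightarrow> x t + y t = 0"
    using x y unfolding L2cube_def by auto
  ultimately show ?thesis
    using x y by (auto simp: L2cube_def)
qed

lemma Dplus_add: "x \<in> Dplus \<Longrightarrow> y \<in> Dplus \<Longrightarrow> (\<lambda>t. x t + y t) \<in> Dplus"
  unfolding Dplus_def by (auto intro: L2cube_add)

lemma power2_scaled_indicator: "(c * indicator C t)^2 = (c^2 * indicator C t :: real)"
  by (simp add: indicator_def)

lemma scaled_indicator_in_Dplus:
  assumes "0 \<le> a" "C \<in> lmeasurable" "C \<subseteq> unit_cube"
  shows "(\<lambda>t. a * indicator C t) \<in> Dplus"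
proof -
  have "integrable lebesgue (\<lambda>t. (a * indicator C t)^2)"
    using assms(2) by (simp add: power2_scaled_indicator lmeasurable_iff_integrable)
  then show ?thesis
    using assms by (auto simp: Dplus_def L2cube_def fmeasurable_def indicator_def)
qed

lemma L2norm_scaled_indicator:
  assumes "C \<in> lmeasurable"
  shows "L2norm (\<lambda>t. c * indicator C t) = \<bar>c\<bar> * sqrt (measure lebesgue C)"
  using assms by (simp add: L2norm_def power2_scaled_indicator fmeasurable_def real_sqrt_mult
      lmeasurable_iff_integrable[symmetric])

lemma L2norm_le_scaled_indicator:
  assumes C: "C \<in> lmeasurable" and c: "0 \<le> c" and f: "\<And>s. \<bar>f s\<bar> \<le> c * indicator C s"
  shows "L2norm f \<le> c * sqrt (measure lebesgue C)"
proof -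
  have f_squared: "(f s)^2 \<le> (c * indicator C s)^2" for s
    using power_mono[OF f[of s] abs_ge_zero, of 2] by (simp only: power2_abs)
  have C_integrable: "integrable lebesgue (\<lambda>s. (c * indicator C s)^2)"
    using C by (simp add: power2_scaled_indicator lmeasurable_iff_integrable)
  have "(LINT s|lebesgue. (f s)^2) \<le> (LINT s|lebesgue. (c * indicator C s)^2)"
  proof (cases "integrable lebesgue (\<lambda>s. (f s)^2)")
    case True
    then show ?thesis using C_integrable f_squared by (intro integral_mono)
  next
    case False
    then show ?thesis by (simp add: not_integrable_integral_eq)
  qed
  then have "L2norm f \<le> L2norm (\<lambda>s. c * indicator C s)"
    unfolding L2norm_def by (rule real_sqrt_le_mono)
  with C c show ?thesis by (simp add: L2norm_scaled_indicator)
qed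

lemma autoconv_add_upper_corner_diff_le:
  fixes x :: "real^'n \<Rightarrow> real"
  assumes x: "x \<in> L2cube" and e: "e < 1/2" and a: "0 \<le> a"
  shows "\<bar>autoconv (\<lambda>t. x t + a * indicator (upper_corner e) t) s - autoconv x s\<bar>
    \<le> 2 * a * (LINT u|lebesgue. indicator (lower_corner e) u * \<bar>x u\<bar>) * indicator (upper_corner e) s"
proof -
  define U where "U = (upper_corner e :: (real^'n) set)"
  define I where "I = (LINT u|lebesgue. indicator (lower_corner e) u * \<bar>x u\<bar>)"
  have I_nonneg: "0 \<le> I"
    unfolding I_def by (rule integral_nonneg_AE) simp
  show ?thesis
  proof (cases "s \<in> unit_cube")
    case False
    then show ?thesis
      using I_nonneg a by (simp add: autoconv_def flip: I_def)
  next
    case s: True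
    define B where "B t = indicator (cbox 0 s) t * (a * indicator U (s - t) * x t)" for t
    have lower_integrable: "integrable lebesgue (\<lambda>t. indicator (lower_corner e) t * \<bar>x t\<bar>)"
      using x by (rule integrable_indicator_abs_L2cube) (simp add: lower_corner_def)
    have B_bound: "\<bar>B t\<bar> \<le> a * indicator U s * (indicator (lower_corner e) t * \<bar>x t\<bar>)" for t
      using mem_corners_if_diff_mem_upper_corner[OF s, of t e] a by (auto simp: B_def U_def indicator_def abs_mult)
    have "(\<lambda>t. indicator U (s - t) :: real) \<in> borel_measurable lebesgue"
      by (intro borel_measurable_indicator_reflection) (simp add: U_def upper_corner_def)
    then have "B \<in> borel_measurable lebesgue"
      using x unfolding B_def[abs_def] L2cube_def
      by (intro borel_measurable_times borel_measurable_indicator borel_measurable_const) auto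
    then have B_integrable: "integrable lebesgue B"
      by (intro Bochner_Integration.integrable_bound[OF integrable_mult_left[OF lower_integrable,
            of "a * indicator U s"]])
        (use B_bound a in \<open>auto simp: abs_mult mult.commute\<close>)
    have "\<bar>integral\<^sup>L lebesgue B\<bar> \<le> (LINT t|lebesgue. \<bar>B t\<bar>)"
      by (rule integral_abs_bound)
    also have "\<dots> \<le> (LINT t|lebesgue. a * indicator U s * (indicator (lower_corner e) t * \<bar>x t\<bar>))"
      using B_integrable lower_integrable B_bound by (intro integral_mono) auto
    also have "\<dots> = a * I * indicator U s"
      by (simp add: I_def)
    finally have B_integral_bound: "\<bar>integral\<^sup>L lebesgue B\<bar> \<le> a * I * indicator U s" .
    have U_autoconv_vanishes: "a * indicator U (s - t) * (a * indicator U t) = 0" for t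
      using diff_upper_corner_notin_upper_corner[OF s e, of t] by (auto simp: U_def indicator_def)
    have "\<bar>autoconv (\<lambda>t. x t + a * indicator U t) s - autoconv x s\<bar> \<le> 2 * \<bar>integral\<^sup>L lebesgue B\<bar>"
      unfolding B_def
      by (rule autoconv_add_diff_le_cross_term[OF s, where h = "\<lambda>t. a * indicator U t"])
        (use B_integrable[unfolded B_def] U_autoconv_vanishes in simp_all)
    with B_integral_bound show ?thesis
      by (simp add: U_def I_def)
  qed
qed

lemma eventually_notin_lower_corner:
  fixes u :: "real^'n"
  assumes e: "e \<longlonglongrightarrow> 0" and u: "u \<noteq> 0"
  shows "\<forall>\<^sub>F k in sequentially. u \<notin> lower_corner (e k)"
proof -
  obtain j where j: "u $ j \<noteq> 0"
    using u by (metis vec_eq_iff zero_index)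
  show ?thesis
  proof (cases "u $ j < 0")
    case True
    then show ?thesis
      by (auto simp: lower_corner_def mem_box_cart intro!: always_eventually exI[of _ j])
  next
    case False
    with j have "\<forall>\<^sub>F k in sequentially. e k < u $ j"
      using order_tendstoD(2)[OF e] by simp
    then show ?thesis
      by eventually_elim (auto simp: lower_corner_def mem_box_cart not_le intro!: exI[of _ j])
  qed
qed

lemma tendsto_integral_lower_corner:
  fixes f :: "real^'n \<Rightarrow> real"
  assumes f: "f \<in> borel_measurable lebesgue"
    and f_integrable: "integrable lebesgue (\<lambda>u. indicator (lower_corner c) u * f u)"
    and e_le: "\<And>k. e k \<le> c" and e: "e \<longlonglongrightarrow> 0"
  shows "(\<lambda>k. LINT u|lebesgue. indicator (lower_corner (e k)) u * f u) \<longlonglongrightarrow> 0"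
proof -
  have "(\<lambda>k. LINT u|lebesgue. indicator (lower_corner (e k)) u * f u)
      \<longlonglongrightarrow> integral\<^sup>L lebesgue (\<lambda>u::real^'n. 0::real)"
  proof (rule integral_dominated_convergence[where w = "\<lambda>u. \<bar>indicator (lower_corner c) u * f u\<bar>"
        and s = "\<lambda>k u. indicator (lower_corner (e k)) u * f u" and f = "\<lambda>u. 0"])
    show "(\<lambda>u. indicator (lower_corner (e k)) u * f u) \<in> borel_measurable lebesgue" for k
      using f by (intro borel_measurable_times borel_measurable_indicator) (simp_all add: lower_corner_def)
    show "AE u in lebesgue. norm (indicator (lower_corner (e k)) u * f u)
        \<le> \<bar>indicator (lower_corner c) u * f u\<bar>" for k
      using lower_corner_mono[OF e_le[of k]] by (intro AE_I2) (auto simp: indicator_def)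
    have "AE u in lebesgue. u \<noteq> 0"
      by (rule AE_completion) (rule AE_lborel_singleton)
    then show "AE u in lebesgue. (\<lambda>k. indicator (lower_corner (e k)) u * f u) \<longlonglongrightarrow> 0"
    proof eventually_elim
      case (elim u)
      show ?case
        using eventually_notin_lower_corner[OF e elim]
        by (rule tendsto_eventually[OF eventually_mono]) simp
    qed
  qed (use f_integrable in auto)
  then show ?thesis by simp
qed

definition corner_bump :: "real \<Rightarrow> real \<Rightarrow> real^'n \<Rightarrow> real" where
  "corner_bump r e t = r / sqrt (e ^ CARD('n)) * indicator (upper_corner e) t"

lemma corner_bump_in_Dplus: "0 \<le> r \<Longrightarrow> 0 < e \<Longrightarrow> e \<le> 1 \<Longrightarrow> corner_bump r e \<in> Dplus"
  unfolding corner_bump_def[abs_def]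
  by (intro scaled_indicator_in_Dplus upper_corner_lmeasurable upper_corner_subset_unit_cube) simp_all

lemma L2norm_corner_bump: "0 \<le> r \<Longrightarrow> 0 < e \<Longrightarrow> L2norm (corner_bump r e :: real^'n \<Rightarrow> real) = r"
  unfolding corner_bump_def[abs_def] L2norm_scaled_indicator[OF upper_corner_lmeasurable]
  by (simp add: measure_upper_corner)

lemma L2norm_autoconv_add_corner_bump_le:
  fixes x :: "real^'n \<Rightarrow> real"
  assumes x: "x \<in> L2cube" and e: "0 < e" "e < 1/2" and r: "0 \<le> r"
  shows "L2norm (\<lambda>s. autoconv (\<lambda>t. x t + corner_bump r e t) s - autoconv x s)
    \<le> 2 * r * (LINT u|lebesgue. indicator (lower_corner e) u * \<bar>x u\<bar>)"
proof -
  define a where "a = r / sqrt (e ^ CARD('n))"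
  define I where "I = (LINT u|lebesgue. indicator (lower_corner e) u * \<bar>x u\<bar>)"
  have a: "0 \<le> a" "a * sqrt (e ^ CARD('n)) = r"
    using e r by (simp_all add: a_def)
  have "0 \<le> I"
    unfolding I_def by (rule integral_nonneg_AE) simp
  with a have "0 \<le> 2 * a * I"
    by simp
  have "2 * a * I * sqrt (measure lebesgue (upper_corner e :: (real^'n) set)) = 2 * r * I"
    using e(1) by (simp add: measure_upper_corner mult_ac flip: a(2))
  from L2norm_le_scaled_indicator[OF upper_corner_lmeasurable \<open>0 \<le> 2 * a * I\<close>
      autoconv_add_upper_corner_diff_le[OF x e(2) a(1), folded I_def], unfolded this]
  show ?thesis
    unfolding corner_bump_def[abs_def] a_def[symmetric] I_def[symmetric] .
qed

theorem theorem4p1: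
  fixes xdag :: "real^'n \<Rightarrow> real" and r :: real
  assumes "xdag \<in> Dplus" and "r > 0"
  shows "\<exists>xs :: nat \<Rightarrow> (real^'n \<Rightarrow> real).
           (\<forall>k. xs k \<in> Dplus) \<and>
           (\<forall>k. L2norm (\<lambda>t. xs k t - xdag t) \<le> r) \<and>
           (\<lambda>k. L2norm (\<lambda>s. autoconv (xs k) s - autoconv xdag s)) \<longlonglongrightarrow> 0 \<and>
           \<not> ((\<lambda>k. L2norm (\<lambda>t. xs k t - xdag t)) \<longlonglongrightarrow> 0)"
proof -
  have xdag: "xdag \<in> L2cube"
    using assms(1) by (simp add: Dplus_def)
  define e where "e k = 1 / (real k + 3)" for k :: nat
  define xs where "xs k = (\<lambda>t. xdag t + corner_bump r (e k) t)" for k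
  have e: "0 < e k" "e k < 1/2" "e k \<le> 1" for k
    unfolding e_def by auto
  have e_tendsto: "e \<longlonglongrightarrow> 0"
    unfolding e_def using LIMSEQ_ignore_initial_segment[OF lim_1_over_n, of 3] by (simp add: add.commute)
  have "xs k \<in> Dplus" for k
    unfolding xs_def using assms e by (intro Dplus_add corner_bump_in_Dplus) simp_all
  moreover have distance: "L2norm (\<lambda>t. xs k t - xdag t) = r" for k
    using assms(2) e(1) by (simp add: xs_def L2norm_corner_bump)
  moreover have "(\<lambda>k. L2norm (\<lambda>s. autoconv (xs k) s - autoconv xdag s)) \<longlonglongrightarrow> 0"
  proof (rule Lim_null_comparison)
    define I where "I k = (LINT u|lebesgue. indicator (lower_corner (e k)) u * \<bar>xdag u\<bar>)" for k
    show "\<forall>\<^sub>F k in sequentially. norm (L2norm (\<lambda>s. autoconv (xs k) s - autoconv xdag s)) \<le> 2 * r * I k"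
      using L2norm_autoconv_add_corner_bump_le[OF xdag e(1,2)] assms(2)
      by (simp add: xs_def I_def L2norm_def)
    have "I \<longlonglongrightarrow> 0"
      unfolding I_def using xdag e(3)
      by (intro tendsto_integral_lower_corner[where c = 1] integrable_indicator_abs_L2cube e_tendsto)
        (auto simp: L2cube_def lower_corner_def)
    then show "(\<lambda>k. 2 * r * I k) \<longlonglongrightarrow> 0"
      by (simp add: tendsto_mult_right_zero)
  qed
  moreover have "\<not> (\<lambda>k. L2norm (\<lambda>t. xs k t - xdag t)) \<longlonglongrightarrow> 0"
    using distance assms(2) LIMSEQ_const_iff[of r 0] by simp
  ultimately show ?thesis
    by (intro exI[of _ xs]) simp
qed

end
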